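(* Let $G$ be an $r$-graph on $n$ vertices, let $L>r$ be an integer, and let $0\le k<r$ be the residue of $L$ modulo $r$. If $G$ is $C_L^{(r)}$-hom-free, then one can delete at most $2rL^{-1/r}n^r$ edges from $G$ so that the resulting $r$-graph $G'$ is $\mathscr C_k^{(r)}$-hom-free.
   Context: An $r$-graph is an $r$-uniform hypergraph. For $\ell>r$, the tight cycle $C_\ell^{(r)}$ has vertices $v_1,\dots,v_\ell$ and edges $\{v_i,\dots,v_{i+r-1}\}$, $1\le i\le\ell$ (indices mod $\ell$). A homomorphism $F\to G$ maps $V(F)\to V(G)$ sending each edge of $F$ onto an edge of $G$; $G$ is $F$-hom-free if none exists, and $\mathscr C_k^{(r)}$-hom-free if it is $C_\ell^{(r)}$-hom-free for all $\ell>r$ with $\ell\equiv k\pmod r$. *)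

theory Defs
  imports Complex_Main
begin

type_synonym 'a hgraph = "'a set \<times> 'a set set"

definition uniform_hgraph :: "nat \<Rightarrow> 'a hgraph \<Rightarrow> bool" where
  "uniform_hgraph r G \<longleftrightarrow> finite (fst G) \<and> (\<forall>e\<in>snd G. e \<subseteq> fst G \<and> card e = r)"

definition is_hom :: "'b hgraph \<Rightarrow> 'a hgraph \<Rightarrow> ('b \<Rightarrow> 'a) \<Rightarrow> bool" where
  "is_hom F G f \<longleftrightarrow> (\<forall>v\<in>fst F. f v \<in> fst G) \<and> (\<forall>e\<in>snd F. f ` e \<in> snd G)"

definition hom_free :: "'b hgraph \<Rightarrow> 'a hgraph \<Rightarrow> bool" where
  "hom_free F G \<longleftrightarrow> \<not> (\<exists>f. is_hom F G f)"

definition tight_cycle :: "nat \<Rightarrow> nat \<Rightarrow> nat hgraph" where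
  "tight_cycle r l = ({..<l}, {(\<lambda>j. (i + j) mod l) ` {..<r} | i. i < l})"

definition cycle_class_hom_free :: "nat \<Rightarrow> nat \<Rightarrow> 'a hgraph \<Rightarrow> bool" where
  "cycle_class_hom_free r k G \<longleftrightarrow>
     (\<forall>l. r < l \<and> l mod r = k mod r \<longrightarrow> hom_free (tight_cycle r l) G)"

end

theory Submission
  imports Defs
begin

text \<open>A homomorphism from the tight cycle \<open>C\<^sub>l\<close> is the same as a closed tight walk of
  length \<open>l\<close>, that is, a closed walk in the digraph on \<open>(r-1)\<close>-tuples whose arcs are the
  edges. Around every edge runs a closed walk of length \<open>r\<close>, so a closed walk of length
  \<open>m \<le> L\<close> with \<open>m \<equiv> L (mod r)\<close> could be padded to one of length \<open>L\<close>, which \<open>G\<close> does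
  not have.

  Delete greedily the edges through \<open>(r-1)\<close>-sets of codegree less than
  \<open>d \<approx> 2 r L powr (-1/r) n\<close>; this removes at most \<open>d n^(r-1)\<close> edges, and afterwards every
  \<open>(r-1)\<close>-set of the shadow has codegree at least \<open>d\<close>. On a shortest positive closed walk
  in a residue class, the windows at every \<open>r\<^sup>2\<close>-th position have at least \<open>d^(r-1)\<close>
  continuations by \<open>r - 1\<close> steps each, and these sets are pairwise disjoint: a common
  continuation would give a shorter closed walk in the same class, because a step can be
  reversed by \<open>r - 1\<close> steps around its edge. Hence \<open>m d^(r-1) \<le> r\<^sup>2 n^(r-1)\<close>, which
  forces \<open>m \<le> L\<close>.\<close>

definition tight_walk :: "nat \<Rightarrow> 'a set set \<Rightarrow> 'a list \<Rightarrow> bool" where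
  "tight_walk r E xs \<longleftrightarrow> (\<forall>i. i + r \<le> length xs \<longrightarrow> set (take r (drop i xs)) \<in> E)"

lemma tight_walk_mono: "tight_walk r E xs \<Longrightarrow> E \<subseteq> F \<Longrightarrow> tight_walk r F xs"
  unfolding tight_walk_def by blast

lemma tight_walk_take: "tight_walk r E xs \<Longrightarrow> tight_walk r E (take n xs)"
  unfolding tight_walk_def by (auto simp: take_drop min_def)

lemma tight_walk_drop: "tight_walk r E xs \<Longrightarrow> 0 < r \<Longrightarrow> tight_walk r E (drop n xs)"
  unfolding tight_walk_def by (auto simp: add.assoc)

lemma tight_walk_glue:
  assumes "tight_walk r E (xs @ ys)" "tight_walk r E (ys @ zs)" "r - 1 \<le> length ys"
  shows "tight_walk r E (xs @ ys @ zs)"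
  unfolding tight_walk_def
proof (intro allI impI)
  fix i assume i: "i + r \<le> length (xs @ ys @ zs)"
  show "set (take r (drop i (xs @ ys @ zs))) \<in> E"
  proof (cases "i < length xs")
    case True
    then have "i + r \<le> length (xs @ ys)" using assms(3) by simp
    then show ?thesis using assms(1) unfolding tight_walk_def by auto
  next
    case False
    then have "drop i (xs @ ys @ zs) = drop (i - length xs) (ys @ zs)" by simp
    moreover have "i - length xs + r \<le> length (ys @ zs)" using i False by simp
    ultimately show ?thesis using assms(2) unfolding tight_walk_def by presburger
  qed
qed

lemma tight_walk_edge: "length xs = r \<Longrightarrow> set xs \<in> E \<Longrightarrow> tight_walk r E xs"
  unfolding tight_walk_def by auto

lemma tight_walk_snoc:
  assumes "tight_walk r E xs" "r - 1 \<le> length xs" "0 < r"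
    "insert x (set (drop (length xs - (r - 1)) xs)) \<in> E"
  shows "tight_walk r E (xs @ [x])"
proof -
  let ?k = "length xs - (r - 1)"
  have "tight_walk r E (drop ?k xs @ [x])" using assms by (intro tight_walk_edge) auto
  then have walk: "tight_walk r E (take ?k xs @ drop ?k xs @ [x])"
    using assms(1,2) by (intro tight_walk_glue) auto
  have eq: "take ?k xs @ drop ?k xs @ [x] = xs @ [x]"
    by (subst append_assoc[symmetric], subst append_take_drop_id) (rule refl)
  show ?thesis using walk unfolding eq .
qed

lemma tight_walk_edge_twice:
  assumes "length xs = r" "set xs \<in> E"
  shows "tight_walk r E (xs @ xs)"
  unfolding tight_walk_def
proof (intro allI impI)
  fix i assume "i + r \<le> length (xs @ xs)"
  then have "take r (drop i (xs @ xs)) = drop i xs @ take i xs" using assms(1) by simp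
  also have "set \<dots> = set xs" by (metis Un_commute append_take_drop_id set_append)
  finally show "set (take r (drop i (xs @ xs))) \<in> E" using assms(2) by simp
qed

definition tight_reach :: "nat \<Rightarrow> 'a set set \<Rightarrow> nat \<Rightarrow> 'a list \<Rightarrow> 'a list \<Rightarrow> bool" where
  "tight_reach r E t u v \<longleftrightarrow>
     (\<exists>xs. tight_walk r E xs \<and> length xs = t + (r - 1) \<and> take (r - 1) xs = u \<and> drop t xs = v)"

lemma tight_reach_mono: "tight_reach r E t u v \<Longrightarrow> E \<subseteq> F \<Longrightarrow> tight_reach r F t u v"
  unfolding tight_reach_def using tight_walk_mono by blast

lemma tight_reach_length: "tight_reach r E t u v \<Longrightarrow> length u = r - 1 \<and> length v = r - 1"
  unfolding tight_reach_def by auto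

lemma tight_reach_trans:
  assumes "tight_reach r E a u v" "tight_reach r E b v w"
  shows "tight_reach r E (a + b) u w"
proof -
  obtain xs where xs: "tight_walk r E xs" "length xs = a + (r - 1)" "take (r - 1) xs = u" "drop a xs = v"
    using assms(1) unfolding tight_reach_def by blast
  obtain ys where ys: "tight_walk r E ys" "length ys = b + (r - 1)" "take (r - 1) ys = v" "drop b ys = w"
    using assms(2) unfolding tight_reach_def by blast
  have xs_eq: "xs = take a xs @ v" and ys_eq: "ys = v @ drop (r - 1) ys"
    using xs(4) ys(3) by (metis append_take_drop_id)+
  let ?zs = "take a xs @ ys"
  have zs_eq: "?zs = xs @ drop (r - 1) ys" using xs_eq ys_eq by (metis append.assoc)
  have "length v = r - 1" using xs(2,4) by auto
  then have "tight_walk r E ?zs"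
    using tight_walk_glue[of r E "take a xs" v "drop (r - 1) ys"] xs(1) ys(1) xs_eq ys_eq
    by (metis order_refl)
  moreover have "take (r - 1) ?zs = u" using xs(2,3) by (simp add: zs_eq)
  ultimately show ?thesis
    unfolding tight_reach_def using xs(2) ys(2,4) by (intro exI[of _ ?zs]) auto
qed

lemma tight_reach_between_windows:
  assumes "tight_walk r E xs" "length xs = m + (r - 1)" "0 < r" "p \<le> q" "q \<le> m"
  shows "tight_reach r E (q - p) (take (r - 1) (drop p xs)) (take (r - 1) (drop q xs))"
  unfolding tight_reach_def
proof (intro exI conjI)
  show "tight_walk r E (take (q - p + (r - 1)) (drop p xs))"
    using assms(1,3) by (intro tight_walk_take tight_walk_drop)
  show "drop (q - p) (take (q - p + (r - 1)) (drop p xs)) = take (r - 1) (drop q xs)"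
    using assms(4) by (simp add: drop_take)
qed (use assms in auto)

lemma tight_reach_split:
  assumes "tight_reach r E (a + b) u w" "0 < r"
  obtains v where "tight_reach r E a u v" "tight_reach r E b v w"
proof -
  obtain xs where xs: "tight_walk r E xs" "length xs = (a + b) + (r - 1)" "take (r - 1) xs = u"
    "drop (a + b) xs = w"
    using assms(1) unfolding tight_reach_def by blast
  have "take (r - 1) (drop (a + b) xs) = w" using xs(2) by (simp add: xs(4)[symmetric])
  then show ?thesis
    using that xs(3) tight_reach_between_windows[OF xs(1,2) assms(2), of 0 a]
      tight_reach_between_windows[OF xs(1,2) assms(2), of a "a + b"]
    by simp
qed

lemma tight_reach_one_step:
  assumes "tight_reach r E 1 u v" "0 < r"
  obtains xs where "length xs = r" "set xs \<in> E" "take (r - 1) xs = u" "drop 1 xs = v"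
proof -
  obtain xs where xs: "tight_walk r E xs" "length xs = 1 + (r - 1)" "take (r - 1) xs = u" "drop 1 xs = v"
    using assms(1) unfolding tight_reach_def by blast
  have "set (take r (drop 0 xs)) \<in> E" using xs(1,2) assms(2) unfolding tight_walk_def by simp
  then show ?thesis using that xs assms(2) by simp
qed

lemma tight_reach_around_edge:
  assumes "length xs = r" "set xs \<in> E" "0 < r"
  shows "tight_reach r E r (take (r - 1) xs) (take (r - 1) xs)"
    and "tight_reach r E (r - 1) (drop 1 xs) (take (r - 1) xs)"
proof -
  let ?ws = "take (r + (r - 1)) (xs @ xs)"
  have walk: "tight_walk r E ?ws"
    using tight_walk_edge_twice[OF assms(1,2)] by (rule tight_walk_take)
  show "tight_reach r E r (take (r - 1) xs) (take (r - 1) xs)"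
    unfolding tight_reach_def using assms(1,3) walk by (intro exI[of _ ?ws]) auto
  show "tight_reach r E (r - 1) (drop 1 xs) (take (r - 1) xs)"
    unfolding tight_reach_def using assms(1,3) tight_walk_drop[OF walk assms(3), of 1]
    by (intro exI[of _ "drop 1 ?ws"]) auto
qed

text \<open>Each step can be undone by walking \<open>r - 1\<close> steps around the edge it traverses.\<close>

lemma tight_reach_reverse:
  assumes "tight_reach r E t u v" "0 < r"
  shows "tight_reach r E (t * (r - 1)) v u"
  using assms(1)
proof (induction t arbitrary: v)
  case 0
  then show ?case unfolding tight_reach_def by auto
next
  case (Suc t)
  obtain w where uw: "tight_reach r E t u w" and wv: "tight_reach r E 1 w v"
    using tight_reach_split[of r E t 1 u v] Suc.prems assms(2) by auto
  obtain xs where "length xs = r" "set xs \<in> E" "take (r - 1) xs = w" "drop 1 xs = v"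
    using tight_reach_one_step[OF wv assms(2)] .
  then have "tight_reach r E (r - 1) v w" using tight_reach_around_edge(2) assms(2) by blast
  from tight_reach_trans[OF this Suc.IH[OF uw]] show ?case by (simp add: add.commute)
qed

lemma closed_tight_reach_add_multiple:
  assumes "tight_reach r E m u u" "0 < m" "0 < r"
  shows "tight_reach r E (m + c * r) u u"
proof -
  obtain v where "tight_reach r E 1 u v"
    using tight_reach_split[of r E 1 "m - 1" u u] assms by auto
  then obtain xs where "length xs = r" "set xs \<in> E" "take (r - 1) xs = u"
    using tight_reach_one_step assms(3) by metis
  then have loop: "tight_reach r E r u u" using tight_reach_around_edge(1) assms(3) by blast
  show ?thesis
  proof (induction c)
    case 0
    then show ?case using assms(1) by simp
  next
    case (Suc c)
    from tight_reach_trans[OF this loop] show ?case by (simp add: ac_simps)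
  qed
qed

lemma set_take_drop_eq_image_nth:
  "i + r \<le> length xs \<Longrightarrow> set (take r (drop i xs)) = (\<lambda>j. xs ! (i + j)) ` {..<r}"
  by (force simp: set_conv_nth)

lemma tight_cycle_hom_imp_closed_tight_reach:
  assumes "is_hom (tight_cycle r l) (V, E) f" "0 < r" "r < l"
  shows "\<exists>u. tight_reach r E l u u"
proof -
  let ?xs = "map (\<lambda>i. f (i mod l)) [0..<l + (r - 1)]"
  have "tight_walk r E ?xs"
    unfolding tight_walk_def
  proof (intro allI impI)
    fix i assume i: "i + r \<le> length ?xs"
    then have "set (take r (drop i ?xs)) = f ` (\<lambda>j. (i + j) mod l) ` {..<r}"
      by (subst set_take_drop_eq_image_nth) (auto simp: image_image)
    moreover have "i < l" using i assms(2) by simp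
    then have "(\<lambda>j. (i + j) mod l) ` {..<r} \<in> snd (tight_cycle r l)"
      unfolding tight_cycle_def by auto
    ultimately show "set (take r (drop i ?xs)) \<in> E"
      using assms(1) unfolding is_hom_def by auto
  qed
  moreover have "drop l ?xs = take (r - 1) ?xs"
    by (rule nth_equalityI) auto
  ultimately have "tight_reach r E l (take (r - 1) ?xs) (take (r - 1) ?xs)"
    unfolding tight_reach_def by (intro exI[of _ ?xs]) auto
  then show ?thesis by blast
qed

lemma closed_tight_reach_imp_tight_cycle_hom:
  assumes "tight_reach r E l u u" "\<forall>e\<in>E. e \<subseteq> V" "0 < r" "r < l"
  shows "\<exists>f. is_hom (tight_cycle r l) (V, E) f"
proof -
  obtain xs where xs: "tight_walk r E xs" "length xs = l + (r - 1)" "take (r - 1) xs = u"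
    "drop l xs = u"
    using assms(1) unfolding tight_reach_def by blast
  have window: "(\<lambda>j. xs ! (i + j)) ` {..<r} \<in> E" if "i < l" for i
  proof -
    have "i + r \<le> length xs" using xs(2) that assms(3) by simp
    then show ?thesis
      using xs(1) set_take_drop_eq_image_nth[of i r xs] unfolding tight_walk_def by auto
  qed
  have periodic: "xs ! ((i + j) mod l) = xs ! (i + j)" if "i < l" "j < r" for i j
  proof (cases "i + j < l")
    case False
    then have "(i + j) mod l = i + j - l" "i + j - l < r - 1"
      using that assms(4) by (auto simp: mod_if)
    moreover have "xs ! (l + p) = xs ! p" if "p < r - 1" for p
    proof -
      have "xs ! (l + p) = drop l xs ! p" using xs(2) that by simp
      also have "\<dots> = take (r - 1) xs ! p" using xs(3,4) by simp
      finally show ?thesis using that by simp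
    qed
    moreover have "i + j = l + (i + j - l)" using False by simp
    ultimately show ?thesis by metis
  qed simp
  have "is_hom (tight_cycle r l) (V, E) (nth xs)"
    unfolding is_hom_def
  proof (intro conjI ballI)
    fix v assume "v \<in> fst (tight_cycle r l)"
    then have "v < l" unfolding tight_cycle_def by simp
    have "xs ! v \<in> (\<lambda>j. xs ! (v + j)) ` {..<r}"
      using assms(3) by (intro image_eqI[of _ _ 0]) auto
    then show "xs ! v \<in> fst (V, E)" using window[OF \<open>v < l\<close>] assms(2) by (simp add: subset_iff)
  next
    fix e assume "e \<in> snd (tight_cycle r l)"
    then obtain i where i: "i < l" and e: "e = (\<lambda>j. (i + j) mod l) ` {..<r}"
      unfolding tight_cycle_def by auto
    have "nth xs ` e = (\<lambda>j. xs ! ((i + j) mod l)) ` {..<r}"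
      unfolding e image_image ..
    also have "\<dots> = (\<lambda>j. xs ! (i + j)) ` {..<r}"
      using periodic[OF i] by (intro image_cong) auto
    finally show "nth xs ` e \<in> snd (V, E)" using window[OF i] by simp
  qed
  then show ?thesis by blast
qed

definition shadow :: "nat \<Rightarrow> 'a set set \<Rightarrow> 'a set set" where
  "shadow r E = {S. card S = r - 1 \<and> (\<exists>e\<in>E. S \<subseteq> e)}"

definition codegree :: "'a set set \<Rightarrow> 'a set \<Rightarrow> nat" where
  "codegree E S = card {x. insert x S \<in> E}"

lemma shadow_subset_subsets: "\<forall>e\<in>E. e \<subseteq> V \<Longrightarrow> shadow r E \<subseteq> {S. S \<subseteq> V \<and> card S = r - 1}"
  unfolding shadow_def by blast

lemma finite_shadow: "finite V \<Longrightarrow> \<forall>e\<in>E. e \<subseteq> V \<Longrightarrow> finite (shadow r E)"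
  by (rule finite_subset[OF shadow_subset_subsets]) auto

lemma card_shadow_le:
  assumes "finite V" "\<forall>e\<in>E. e \<subseteq> V"
  shows "card (shadow r E) \<le> card V ^ (r - 1)"
proof -
  have "card (shadow r E) \<le> card {S. S \<subseteq> V \<and> card S = r - 1}"
    using assms(1) shadow_subset_subsets[OF assms(2)] by (intro card_mono) auto
  also have "\<dots> = card V choose (r - 1)" using n_subsets[OF assms(1)] .
  also have "\<dots> \<le> card V ^ (r - 1)"
    by (cases "r - 1 \<le> card V") (auto simp: binomial_le_pow binomial_eq_0)
  finally show ?thesis .
qed

lemma distinct_subset_edge_in_shadow:
  "e \<in> E \<Longrightarrow> set ys \<subseteq> e \<Longrightarrow> distinct ys \<Longrightarrow> length ys = r - 1 \<Longrightarrow> set ys \<in> shadow r E"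
  unfolding shadow_def by (auto simp: distinct_card)

lemma card_edges_containing_le_codegree:
  assumes "finite V" "\<forall>e\<in>E. e \<subseteq> V \<and> card e = r" "0 < r" "card S = r - 1"
  shows "card {e \<in> E. S \<subseteq> e} \<le> codegree E S"
proof -
  have "{e \<in> E. S \<subseteq> e} \<subseteq> (\<lambda>x. insert x S) ` {x. insert x S \<in> E}"
  proof
    fix e assume e: "e \<in> {e \<in> E. S \<subseteq> e}"
    then have "card e = r" using assms(2) by auto
    then have "finite e" using assms(3) by (intro card_ge_0_finite) simp
    then have "card (e - S) = 1"
      using e \<open>card e = r\<close> assms(3,4) by (simp add: card_Diff_subset rev_finite_subset)
    then obtain x where "e - S = {x}" using card_1_singletonE by blast
    then have "e = insert x S" using e by blast
    then show "e \<in> (\<lambda>x. insert x S) ` {x. insert x S \<in> E}" using e by blast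
  qed
  moreover have "{x. insert x S \<in> E} \<subseteq> V" using assms(2) by blast
  then have fin: "finite {x. insert x S \<in> E}" using assms(1) by (rule finite_subset)
  ultimately have "card {e \<in> E. S \<subseteq> e} \<le> card ((\<lambda>x. insert x S) ` {x. insert x S \<in> E})"
    by (intro card_mono finite_imageI)
  also have "\<dots> \<le> codegree E S" unfolding codegree_def using fin by (rule card_image_le)
  finally show ?thesis .
qed

lemma remove_low_codegree_edges:
  assumes "finite V" "\<forall>e\<in>E. e \<subseteq> V \<and> card e = r" "0 < r"
  shows "\<exists>E' \<subseteq> E. card (E - E') \<le> (d - 1) * card (shadow r E) \<and>
           (\<forall>S\<in>shadow r E'. d \<le> codegree E' S)"
  using assms(2)
proof (induction "card (shadow r E)" arbitrary: E rule: less_induct)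
  case less
  show ?case
  proof (cases "\<forall>S\<in>shadow r E. d \<le> codegree E S")
    case True
    then show ?thesis by (intro exI[of _ E]) auto
  next
    case False
    then obtain S where S: "S \<in> shadow r E" "codegree E S < d" by (auto simp: not_le)
    define E1 where "E1 = {e \<in> E. \<not> S \<subseteq> e}"
    have fin_shadow: "finite (shadow r E)" using finite_shadow assms(1) less.prems by blast
    have "shadow r E1 \<subseteq> shadow r E - {S}" unfolding shadow_def E1_def by auto
    then have "card (shadow r E1) \<le> card (shadow r E - {S})"
      using fin_shadow by (intro card_mono) auto
    also have "\<dots> < card (shadow r E)" using card_Diff1_less[OF fin_shadow S(1)] .
    finally have smaller: "card (shadow r E1) < card (shadow r E)" .
    obtain E' where E': "E' \<subseteq> E1" "card (E1 - E') \<le> (d - 1) * card (shadow r E1)"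
      "\<forall>S\<in>shadow r E'. d \<le> codegree E' S"
      using less.hyps[OF smaller] less.prems unfolding E1_def by auto
    have "E - E1 = {e \<in> E. S \<subseteq> e}" unfolding E1_def by blast
    then have "card (E - E1) \<le> d - 1"
      using card_edges_containing_le_codegree[OF assms(1) less.prems assms(3)] S
      unfolding shadow_def by fastforce
    moreover have "finite E"
      using assms(1) less.prems by (intro finite_subset[of E "Pow V"]) auto
    then have "card (E - E') \<le> card (E - E1) + card (E1 - E')"
      using E'(1) unfolding E1_def by (intro order_trans[OF card_mono card_Un_le]) auto
    ultimately have "card (E - E') \<le> (d - 1) + (d - 1) * card (shadow r E1)"
      using E'(2) by linarith
    also have "\<dots> = (d - 1) * Suc (card (shadow r E1))" by simp
    also have "\<dots> \<le> (d - 1) * card (shadow r E)"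
      using smaller by (intro mult_le_mono2) simp
    finally show ?thesis using E'(1,3) unfolding E1_def by (intro exI[of _ E']) auto
  qed
qed

lemma edge_list_distinct: "\<forall>e\<in>E. card e = r \<Longrightarrow> set xs \<in> E \<Longrightarrow> length xs = r \<Longrightarrow> distinct xs"
  by (simp add: card_distinct)

lemma tight_walk_window_in_shadow:
  assumes "tight_walk r E xs" "\<forall>e\<in>E. card e = r" "i + r \<le> length xs" "i \<le> k" "k \<le> Suc i"
  shows "set (take (r - 1) (drop k xs)) \<in> shadow r E"
proof -
  let ?W = "take r (drop i xs)"
  have W: "set ?W \<in> E" "length ?W = r"
    using assms(1,3) unfolding tight_walk_def by auto
  have "take (r - 1) (drop k xs) = take (r - 1) (drop (k - i) ?W)"
    using assms(4,5) by (auto simp: drop_take min_def)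
  moreover have "distinct (take (r - 1) (drop (k - i) ?W))"
    using assms(2) by (intro distinct_take distinct_drop edge_list_distinct[OF _ W]) blast
  moreover have "set (take (r - 1) (drop (k - i) ?W)) \<subseteq> set ?W"
    by (meson set_drop_subset set_take_subset subset_trans)
  moreover have "length (take (r - 1) (drop (k - i) ?W)) = r - 1"
    using W(2) assms(4,5) by auto
  ultimately show ?thesis using distinct_subset_edge_in_shadow[OF W(1)] by metis
qed

lemma tight_walk_last_in_shadow:
  assumes "tight_walk r E (u @ w)" "\<forall>e\<in>E. card e = r" "0 < r"
    and "set u \<in> shadow r E" "length u = r - 1"
  shows "set (drop (length w) (u @ w)) \<in> shadow r E"
proof (cases w rule: rev_cases)
  case Nil
  then show ?thesis using assms(4) by simp
next
  case (snoc w' x)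
  then have "set (take (r - 1) (drop (length w) (u @ w))) \<in> shadow r E"
    using assms(2,3,5) by (intro tight_walk_window_in_shadow[OF assms(1), of "length w'"]) auto
  moreover have "take (r - 1) (drop (length w) (u @ w)) = drop (length w) (u @ w)"
    using assms(5) by (intro take_all) simp
  ultimately show ?thesis by metis
qed

definition tight_extensions :: "nat \<Rightarrow> 'a set \<Rightarrow> 'a set set \<Rightarrow> 'a list \<Rightarrow> nat \<Rightarrow> 'a list set" where
  "tight_extensions r V E u j = {w. set w \<subseteq> V \<and> length w = j \<and> tight_walk r E (u @ w)}"

lemma finite_tight_extensions: "finite V \<Longrightarrow> finite (tight_extensions r V E u j)"
  unfolding tight_extensions_def
  by (rule finite_subset[OF _ finite_lists_length_eq[of V j]]) auto

lemma tight_extensions_reach: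
  "w \<in> tight_extensions r V E u (r - 1) \<Longrightarrow> length u = r - 1 \<Longrightarrow> tight_reach r E (r - 1) u w"
  unfolding tight_extensions_def tight_reach_def by (intro exI[of _ "u @ w"]) auto

lemma card_tight_extensions_ge:
  assumes fin: "finite V" and EV: "\<forall>e\<in>E. e \<subseteq> V \<and> card e = r" and r: "0 < r"
    and codeg: "\<forall>S\<in>shadow r E. d \<le> codegree E S"
    and u: "set u \<in> shadow r E" "length u = r - 1"
  shows "d ^ j \<le> card (tight_extensions r V E u j)"
proof (induction j)
  case 0
  have "tight_extensions r V E u 0 = {[]}"
    using u(2) r unfolding tight_extensions_def tight_walk_def by auto
  then show ?case by simp
next
  case (Suc j)
  let ?P = "tight_extensions r V E u j"
  let ?S = "\<lambda>w. set (drop j (u @ w))"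
  let ?X = "\<lambda>w. {x. insert x (?S w) \<in> E}"
  have finX: "finite (?X w)" for w
    using fin by (rule finite_subset[rotated]) (use EV in blast)
  have shadow: "?S w \<in> shadow r E" if "w \<in> ?P" for w
    using that tight_walk_last_in_shadow[of r E u w] EV r u
    unfolding tight_extensions_def by auto
  have snoc: "w @ [x] \<in> tight_extensions r V E u (Suc j)" if "w \<in> ?P" "x \<in> ?X w" for w x
  proof -
    have "tight_walk r E ((u @ w) @ [x])"
      using that u(2) r by (intro tight_walk_snoc) (auto simp: tight_extensions_def)
    moreover have "x \<in> V" using that(2) EV by blast
    ultimately show ?thesis using that(1) unfolding tight_extensions_def by simp
  qed
  have "d ^ Suc j \<le> card ?P * d" using Suc.IH by simp
  also have "\<dots> \<le> (\<Sum>w\<in>?P. card (?X w))"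
    using sum_bounded_below[of ?P d "\<lambda>w. card (?X w)"] codeg shadow
    unfolding codegree_def by simp
  also have "\<dots> = card (SIGMA w:?P. ?X w)"
    using finite_tight_extensions[OF fin] finX by (simp add: card_SigmaI)
  also have "\<dots> = card ((\<lambda>(w, x). w @ [x]) ` (SIGMA w:?P. ?X w))"
    by (rule card_image[symmetric]) (auto simp: inj_on_def)
  also have "\<dots> \<le> card (tight_extensions r V E u (Suc j))"
    using snoc finite_tight_extensions[OF fin] by (intro card_mono) auto
  finally show ?case .
qed

lemma closed_tight_reach_shortcut:
  assumes "tight_reach r E p T U\<^sub>1" "tight_reach r E n U\<^sub>2 T"
    "w \<in> tight_extensions r V E U\<^sub>1 (r - 1)" "w \<in> tight_extensions r V E U\<^sub>2 (r - 1)" "0 < r"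
  shows "tight_reach r E (p + r * (r - 1) + n) T T"
proof -
  have len: "length U\<^sub>1 = r - 1" "length U\<^sub>2 = r - 1"
    using assms(1,2) tight_reach_length by blast+
  have "tight_reach r E ((r - 1) * (r - 1)) w U\<^sub>2"
    using tight_reach_reverse[OF tight_extensions_reach[OF assms(4) len(2)] assms(5)] .
  with tight_extensions_reach[OF assms(3) len(1)]
  have "tight_reach r E ((r - 1) + (r - 1) * (r - 1)) U\<^sub>1 U\<^sub>2"
    by (rule tight_reach_trans)
  moreover have "(r - 1) + (r - 1) * (r - 1) = r * (r - 1)"
    using assms(5) by (cases r) auto
  ultimately have "tight_reach r E (r * (r - 1)) U\<^sub>1 U\<^sub>2" by simp
  from tight_reach_trans[OF tight_reach_trans[OF assms(1) this] assms(2)] show ?thesis .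
qed

text \<open>The shortcut through a common continuation has length \<open>m - (q - p) + r (r - 1)\<close>.\<close>

lemma minimal_closed_tight_walk_extensions_disjoint:
  assumes walk: "tight_walk r E xs" "length xs = m + (r - 1)" "take (r - 1) xs = T" "drop m xs = T"
    and r: "0 < r"
    and minimal: "\<And>m' T'. tight_reach r E m' T' T' \<Longrightarrow> 0 < m' \<Longrightarrow> m' mod r = m mod r \<Longrightarrow> m \<le> m'"
    and pq: "p + r * r \<le> q" "r dvd q - p" "q < m"
  shows "tight_extensions r V E (take (r - 1) (drop p xs)) (r - 1)
       \<inter> tight_extensions r V E (take (r - 1) (drop q xs)) (r - 1) = {}"
proof (rule ccontr)
  assume "\<not> ?thesis"
  then obtain w where w: "w \<in> tight_extensions r V E (take (r - 1) (drop p xs)) (r - 1)"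
    "w \<in> tight_extensions r V E (take (r - 1) (drop q xs)) (r - 1)"
    by blast
  have "tight_reach r E p T (take (r - 1) (drop p xs))"
    using tight_reach_between_windows[OF walk(1,2) r, of 0 p] walk(3) pq by simp
  moreover have "length T = r - 1" using walk(2,4) by auto
  then have "tight_reach r E (m - q) (take (r - 1) (drop q xs)) T"
    using tight_reach_between_windows[OF walk(1,2) r, of q m] walk(4) pq by simp
  ultimately have closed: "tight_reach r E (p + r * (r - 1) + (m - q)) T T"
    using closed_tight_reach_shortcut w r by blast
  obtain c where c: "q - p = r * c" using pq(2) by blast
  then have shift: "(p + r * (r - 1) + (m - q)) + r * c = m + r * (r - 1)"
    using pq by simp
  have residue: "(p + r * (r - 1) + (m - q)) mod r = m mod r"
    using arg_cong[OF shift, of "\<lambda>n. n mod r"] by simp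
  have "r * (r - 1) < r * r" using r by simp
  also have "\<dots> \<le> r * c" using pq(1) c by linarith
  finally have "p + r * (r - 1) + (m - q) < m" using shift by linarith
  then show False using minimal[OF closed _ residue] pq(3) by simp
qed

lemma card_disjoint_family_ge:
  assumes "finite B" "\<And>a. a \<le> J \<Longrightarrow> A a \<subseteq> B" "\<And>a. a \<le> J \<Longrightarrow> c \<le> card (A a)"
    "\<And>a b. a < b \<Longrightarrow> b \<le> J \<Longrightarrow> A a \<inter> A b = {}"
  shows "Suc J * c \<le> card B"
proof -
  have fin: "finite (A a)" if "a \<le> J" for a
    by (rule finite_subset[OF assms(2)[OF that] assms(1)])
  have "Suc J * c \<le> (\<Sum>a\<le>J. card (A a))"
    using sum_bounded_below[of "{..J}" c "\<lambda>a. card (A a)"] assms(3) by simp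
  also have "\<dots> = card (\<Union>a\<le>J. A a)"
  proof (rule card_UN_disjoint[symmetric])
    show "\<forall>a\<in>{..J}. \<forall>b\<in>{..J}. a \<noteq> b \<longrightarrow> A a \<inter> A b = {}"
      using assms(4) by (metis Int_commute atMost_iff linorder_neqE_nat)
  qed (use fin in auto)
  also have "\<dots> \<le> card B"
    using assms(1,2) by (intro card_mono) auto
  finally show ?thesis .
qed

lemma minimal_closed_tight_walk_length_le:
  assumes fin: "finite V" and EV: "\<forall>e\<in>E. e \<subseteq> V \<and> card e = r" and r: "0 < r"
    and codeg: "\<forall>S\<in>shadow r E. d \<le> codegree E S"
    and closed: "tight_reach r E m T T" and m: "0 < m"
    and minimal: "\<And>m' T'. tight_reach r E m' T' T' \<Longrightarrow> 0 < m' \<Longrightarrow> m' mod r = m mod r \<Longrightarrow> m \<le> m'"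
  shows "m * d ^ (r - 1) \<le> r\<^sup>2 * card V ^ (r - 1)"
proof -
  obtain xs where xs: "tight_walk r E xs" "length xs = m + (r - 1)" "take (r - 1) xs = T"
    "drop m xs = T"
    using closed unfolding tight_reach_def by blast
  define J where "J = (m - 1) div r\<^sup>2"
  define A where "A a = tight_extensions r V E (take (r - 1) (drop (a * r\<^sup>2) xs)) (r - 1)" for a
  have inside: "a * r\<^sup>2 < m" if "a \<le> J" for a
  proof -
    have "a * r\<^sup>2 \<le> (m - 1) div r\<^sup>2 * r\<^sup>2" using that unfolding J_def by simp
    also have "\<dots> \<le> m - 1" by (rule div_times_less_eq_dividend)
    finally show ?thesis using m by simp
  qed
  have "Suc J * d ^ (r - 1) \<le> card {w. set w \<subseteq> V \<and> length w = r - 1}"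
  proof (rule card_disjoint_family_ge)
    show "finite {w. set w \<subseteq> V \<and> length w = r - 1}" by (rule finite_lists_length_eq[OF fin])
    show "A a \<subseteq> {w. set w \<subseteq> V \<and> length w = r - 1}" for a
      unfolding A_def tight_extensions_def by auto
    show "d ^ (r - 1) \<le> card (A a)" if "a \<le> J" for a
    proof -
      have "a * r\<^sup>2 + r \<le> length xs" using inside[OF that] xs(2) by simp
      then have "set (take (r - 1) (drop (a * r\<^sup>2) xs)) \<in> shadow r E"
        using tight_walk_window_in_shadow[OF xs(1), of "a * r\<^sup>2" "a * r\<^sup>2"] EV by simp
      then show ?thesis
        unfolding A_def using card_tight_extensions_ge[OF fin EV r codeg] inside[OF that] xs(2)
        by simp
    qed
    show "A a \<inter> A b = {}" if "a < b" "b \<le> J" for a b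
      unfolding A_def
    proof (rule minimal_closed_tight_walk_extensions_disjoint[OF xs r minimal])
      have "Suc a * r\<^sup>2 \<le> b * r\<^sup>2" using that by (intro mult_le_mono1) simp
      then show "a * r\<^sup>2 + r * r \<le> b * r\<^sup>2" by (simp add: power2_eq_square)
      show "r dvd b * r\<^sup>2 - a * r\<^sup>2" by (simp add: power2_eq_square)
      show "b * r\<^sup>2 < m" using inside that by simp
    qed
  qed
  also have "\<dots> = card V ^ (r - 1)" by (rule card_lists_length_eq[OF fin])
  finally have count: "Suc J * d ^ (r - 1) \<le> card V ^ (r - 1)" .
  have "m - 1 = J * r\<^sup>2 + (m - 1) mod r\<^sup>2" unfolding J_def by (rule div_mult_mod_eq[symmetric])
  moreover have "(m - 1) mod r\<^sup>2 < r\<^sup>2" using r by simp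
  ultimately have "m \<le> r\<^sup>2 * Suc J" by (simp add: algebra_simps)
  then have "m * d ^ (r - 1) \<le> r\<^sup>2 * (Suc J * d ^ (r - 1))"
    unfolding mult.assoc[symmetric] by (rule mult_le_mono1)
  also have "\<dots> \<le> r\<^sup>2 * card V ^ (r - 1)" using count by simp
  finally show ?thesis .
qed

lemma square_le_double_power: "0 < (r::nat) \<Longrightarrow> r\<^sup>2 \<le> (2 * r) ^ (r - 1)"
proof (cases "r \<le> 2")
  case True
  moreover assume "0 < r"
  ultimately have "r = 1 \<or> r = 2" by auto
  then show ?thesis by auto
next
  case False
  then have "r\<^sup>2 \<le> (2 * r)\<^sup>2" by (simp add: power_mono)
  also have "\<dots> \<le> (2 * r) ^ (r - 1)" using False by (intro power_increasing) auto
  finally show ?thesis .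
qed

lemma length_le_of_codegree_bound:
  fixes m n r L d :: nat
  assumes r: "0 < r" and L: "0 < L" and n: "0 < n"
    and d: "2 * real r * real L powr (- 1 / real r) * real n \<le> real d"
    and count: "m * d ^ (r - 1) \<le> r\<^sup>2 * n ^ (r - 1)"
  shows "m \<le> L"
proof -
  define y where "y = real L powr (1 / real r)"
  have y: "1 \<le> y" unfolding y_def using L by (intro ge_one_powr_ge_zero) auto
  have "y ^ r = real L"
    unfolding y_def using L r by (simp add: powr_realpow[symmetric] powr_powr)
  have "2 * real r * real n \<le> real d * y"
    using d y L unfolding y_def by (simp add: powr_minus_divide field_simps)
  then have "real m * (2 * real r * real n) ^ (r - 1) \<le> real m * (real d * y) ^ (r - 1)"
    by (intro mult_left_mono power_mono) auto
  also have "\<dots> = real (m * d ^ (r - 1)) * y ^ (r - 1)" by (simp add: power_mult_distrib)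
  also have "\<dots> \<le> real (r\<^sup>2 * n ^ (r - 1)) * y ^ (r - 1)"
    using y by (intro mult_right_mono of_nat_mono[OF count]) auto
  also have "\<dots> \<le> real ((2 * r) ^ (r - 1) * n ^ (r - 1)) * y ^ (r - 1)"
    using y by (intro mult_right_mono of_nat_mono mult_le_mono1 square_le_double_power[OF r]) auto
  also have "\<dots> = (2 * real r * real n) ^ (r - 1) * y ^ (r - 1)"
    by (simp add: power_mult_distrib)
  finally have "real m \<le> y ^ (r - 1)"
    using r n by (simp add: mult.commute)
  also have "\<dots> \<le> y ^ r" using y by (intro power_increasing) auto
  finally show ?thesis using \<open>y ^ r = real L\<close> by simp
qed

lemma short_closed_tight_walk:
  assumes fin: "finite V" and EV: "\<forall>e\<in>E. e \<subseteq> V \<and> card e = r" and r: "0 < r"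
    and codeg: "\<forall>S\<in>shadow r E. d \<le> codegree E S"
    and closed: "tight_reach r E l u u" and l: "0 < l"
  obtains m T where "tight_reach r E m T T" "0 < m" "m mod r = l mod r"
    "m * d ^ (r - 1) \<le> r\<^sup>2 * card V ^ (r - 1)"
proof -
  define P where "P m \<longleftrightarrow> (\<exists>T. tight_reach r E m T T \<and> 0 < m \<and> m mod r = l mod r)" for m
  have "P l" using closed l unfolding P_def by blast
  then obtain m where "P m" and least: "\<And>m'. P m' \<Longrightarrow> m \<le> m'"
    using ex_has_least_nat[of P l id] by auto
  then obtain T where T: "tight_reach r E m T T" "0 < m" "m mod r = l mod r"
    unfolding P_def by blast
  have "m * d ^ (r - 1) \<le> r\<^sup>2 * card V ^ (r - 1)"
    using T least unfolding P_def
    by (intro minimal_closed_tight_walk_length_le[OF fin EV r codeg T(1,2)]) auto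
  with T that show ?thesis by blast
qed

lemma cycle_class_hom_free_of_min_codegree:
  assumes fin: "finite V" and EV: "\<forall>e\<in>E. e \<subseteq> V \<and> card e = r" and r: "0 < r" and L: "r < L"
    and codeg: "\<forall>S\<in>shadow r E. d \<le> codegree E S"
    and d: "2 * real r * real L powr (- 1 / real r) * real (card V) \<le> real d"
    and free: "hom_free (tight_cycle r L) (V, F)" and EF: "E \<subseteq> F" and FV: "\<forall>e\<in>F. e \<subseteq> V"
  shows "cycle_class_hom_free r L (V, E)"
  unfolding cycle_class_hom_free_def hom_free_def
proof (intro allI impI notI)
  fix l assume l: "r < l \<and> l mod r = L mod r"
  assume "\<exists>f. is_hom (tight_cycle r l) (V, E) f"
  then obtain u where "tight_reach r E l u u"
    using tight_cycle_hom_imp_closed_tight_reach r l by blast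
  moreover have "0 < l" using l by linarith
  ultimately obtain m T where T: "tight_reach r E m T T" "0 < m" "m mod r = l mod r"
    and count: "m * d ^ (r - 1) \<le> r\<^sup>2 * card V ^ (r - 1)"
    by (rule short_closed_tight_walk[OF fin EV r codeg])
  obtain v where "tight_reach r E 1 T v"
    using tight_reach_split[of r E 1 "m - 1" T T] T(1,2) r by auto
  then obtain xs where "length xs = r" "set xs \<in> E" by (rule tight_reach_one_step[OF _ r])
  then have "0 < card V" using fin EV r by (cases xs) (auto simp: card_gt_0_iff)
  then have "m \<le> L" using length_le_of_codegree_bound[OF r _ _ d count] L by simp
  moreover have "r dvd L - m" using mod_eq_dvd_iff_nat[OF \<open>m \<le> L\<close>] T(3) l by metis
  ultimately obtain c where "L = m + c * r" by (metis dvd_def le_add_diff_inverse mult.commute)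
  then have "tight_reach r E L T T" using closed_tight_reach_add_multiple[OF T(1,2) r] by simp
  then have "tight_reach r F L T T" using EF by (rule tight_reach_mono)
  then show False
    using closed_tight_reach_imp_tight_cycle_hom[OF _ FV r L] free unfolding hom_free_def by blast
qed

theorem corollary4p2:
  fixes V :: "'a set" and E :: "'a set set" and r L k :: nat
  assumes "r \<ge> 1"
    and "uniform_hgraph r (V, E)"
    and "L > r"
    and "k = L mod r"
    and "hom_free (tight_cycle r L) (V, E)"
  shows "\<exists>E' \<subseteq> E. real (card (E - E')) \<le> 2 * real r * real L powr (- 1 / real r) * real (card V) ^ r
           \<and> cycle_class_hom_free r k (V, E')"
proof -
  have fin: "finite V" and EV: "\<forall>e\<in>E. e \<subseteq> V \<and> card e = r" and r: "0 < r"
    using assms(1,2) unfolding uniform_hgraph_def by auto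
  define \<delta> where "\<delta> = 2 * real r * real L powr (- 1 / real r) * real (card V)"
  define d where "d = Suc (nat \<lfloor>\<delta>\<rfloor>)"
  have "0 \<le> \<delta>" unfolding \<delta>_def by simp
  then have d: "\<delta> \<le> real d" "real (d - 1) \<le> \<delta>" unfolding d_def by linarith+
  obtain E' where E': "E' \<subseteq> E" "card (E - E') \<le> (d - 1) * card (shadow r E)"
    "\<forall>S\<in>shadow r E'. d \<le> codegree E' S"
    using remove_low_codegree_edges[OF fin EV r] by blast
  have "card (E - E') \<le> (d - 1) * card V ^ (r - 1)"
    using E'(2) card_shadow_le[OF fin] EV by (meson mult_le_mono2 order_trans)
  then have "real (card (E - E')) \<le> real ((d - 1) * card V ^ (r - 1))" by (rule of_nat_mono)
  also have "\<dots> = real (d - 1) * real (card V) ^ (r - 1)" by simp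
  also have "\<dots> \<le> \<delta> * real (card V) ^ (r - 1)" using d(2) by (intro mult_right_mono) auto
  also have "\<dots> = 2 * real r * real L powr (- 1 / real r) * real (card V) ^ r"
    unfolding \<delta>_def using r by (simp add: power_eq_if)
  finally have cost: "real (card (E - E')) \<le> 2 * real r * real L powr (- 1 / real r) * real (card V) ^ r" .
  have "cycle_class_hom_free r L (V, E')"
    using EV E'(1) d(1) unfolding \<delta>_def
    by (intro cycle_class_hom_free_of_min_codegree[OF fin _ r assms(3) E'(3) _ assms(5) E'(1)]) auto
  then have "cycle_class_hom_free r k (V, E')"
    unfolding cycle_class_hom_free_def assms(4) by simp
  with E'(1) cost show ?thesis by blast
qed

end
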